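(* Let $V$ be a real vector space with a symplectic form $\sigma$, $\mu$ a finitely additive probability measure on the lattice $\mathcal{L}(V)$ of all linear subspaces of $V$, and $K,H\in\mathcal{L}(V)$ symplectic planes. Then $\mu(K)=\mu(H)$.
   Context: A symplectic form is a bilinear, antisymmetric, non-degenerate map $\sigma:V\times V\to\mathbb{R}$. For a subspace $H$, $H'=\{v\in V:\sigma(v,h)=0\ \forall h\in H\}$. $\mathcal{L}(V)$ is ordered by inclusion, with $H\vee K=H+K$, $H\wedge K=H\cap K$, $0=\{0\}$, $1=V$. $H,K$ are separated if $H\subset K'$. A symplectic plane is a two-dimensional subspace $H$ with $H\cap H'=\{0\}$. A finitely additive probability measure on $\mathcal{L}(V)$ is a map $\mu$ into $[0,1]$ with $\mu(\{0\})=0$, $\mu(V)=1$, monotone, and $\mu(H_1+\dots+H_n)=\sum_k\mu(H_k)$ whenever $H_1,\dots,H_n$ are pairwise separated. *)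

theory Defs
  imports "HOL-Analysis.Analysis"
begin

definition symplectic_form :: "('v::real_vector \<Rightarrow> 'v \<Rightarrow> real) \<Rightarrow> bool" where
  "symplectic_form \<sigma> \<longleftrightarrow> bilinear \<sigma> \<and> (\<forall>u v. \<sigma> u v = - \<sigma> v u)
     \<and> (\<forall>u. (\<forall>v. \<sigma> u v = 0) \<longrightarrow> u = 0)"

definition sperp :: "('v::real_vector \<Rightarrow> 'v \<Rightarrow> real) \<Rightarrow> 'v set \<Rightarrow> 'v set" where
  "sperp \<sigma> H = {v. \<forall>h\<in>H. \<sigma> v h = 0}"

definition separated :: "('v::real_vector \<Rightarrow> 'v \<Rightarrow> real) \<Rightarrow> 'v set \<Rightarrow> 'v set \<Rightarrow> bool" where
  "separated \<sigma> H K \<longleftrightarrow> H \<subseteq> sperp \<sigma> K"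

definition symplectic_plane :: "('v::real_vector \<Rightarrow> 'v \<Rightarrow> real) \<Rightarrow> 'v set \<Rightarrow> bool" where
  "symplectic_plane \<sigma> H \<longleftrightarrow> subspace H \<and> dim H = 2 \<and> H \<inter> sperp \<sigma> H = {0}"

text \<open>Finitely additive probability measure on the lattice of all linear subspaces.
  The join H_1 \<or> ... \<or> H_n = H_1 + ... + H_n is the span of the union.\<close>
definition fa_prob_measure :: "('v::real_vector \<Rightarrow> 'v \<Rightarrow> real) \<Rightarrow> ('v set \<Rightarrow> real) \<Rightarrow> bool" where
  "fa_prob_measure \<sigma> \<mu> \<longleftrightarrow>
     (\<forall>H. subspace H \<longrightarrow> 0 \<le> \<mu> H \<and> \<mu> H \<le> 1)
   \<and> \<mu> {0} = 0 \<and> \<mu> UNIV = 1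
   \<and> (\<forall>H K. subspace H \<and> subspace K \<and> H \<subseteq> K \<longrightarrow> \<mu> H \<le> \<mu> K)
   \<and> (\<forall>(n::nat) Hs. (\<forall>i<n. subspace (Hs i))
        \<and> (\<forall>i<n. \<forall>j<n. i \<noteq> j \<longrightarrow> separated \<sigma> (Hs i) (Hs j))
        \<longrightarrow> \<mu> (span (\<Union>i<n. Hs i)) = (\<Sum>i<n. \<mu> (Hs i)))"

end

theory Submission
  imports Defs
begin

text \<open>Every line is separated from itself, so additivity gives \<open>\<mu> L = 2 \<mu> L\<close> and lines are
  null. If \<open>\<sigma> a b \<noteq> 0\<close>, any vector \<open>g\<close> can be corrected by a combination of \<open>a\<close> and \<open>b\<close> to a
  vector \<open>g'\<close> with \<open>\<sigma> g' a = \<sigma> g' b = 0\<close>; then \<open>span {a, b, g}\<close> is the separated sum of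
  \<open>span {a, b}\<close> and the null line through \<open>g'\<close>, so adding \<open>g\<close> does not change the measure.
  Consequently two symplectic planes sharing a vector have equal measure. Given symplectic
  pairs \<open>(a, b)\<close> and \<open>(c, d)\<close>, either some cross pairing is nonzero and one intermediate
  plane suffices, or all vanish and \<open>span {b, a + c}\<close>, \<open>span {a + c, d}\<close> link the two planes.\<close>

lemma span_Un_spans: "span (span A \<union> span B) = span (A \<union> B)"
  unfolding span_eq by (auto intro: span_base span_mono[THEN subsetD])

lemma bilinear_eq_0_on_spans:
  assumes "bilinear \<sigma>" and "\<And>x y. x \<in> A \<Longrightarrow> y \<in> B \<Longrightarrow> \<sigma> x y = 0"
    and "x \<in> span A" and "y \<in> span B"
  shows "\<sigma> x y = 0"
proof -
  have "\<sigma> x y = (\<lambda>_ _. 0) x y"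
    by (rule bilinear_eq[OF assms(1), of _ "span A" A "span B" B])
      (use assms(2-4) in \<open>auto simp: bilinear_def linear_zero\<close>)
  then show ?thesis
    by simp
qed

lemma symplectic_form_bilinear: "symplectic_form \<sigma> \<Longrightarrow> bilinear \<sigma>"
  by (simp add: symplectic_form_def)

lemma symplectic_form_antisym: "symplectic_form \<sigma> \<Longrightarrow> \<sigma> u v = - \<sigma> v u"
  unfolding symplectic_form_def by blast

lemma symplectic_form_alternating: "symplectic_form \<sigma> \<Longrightarrow> \<sigma> u u = 0"
  using symplectic_form_antisym[of \<sigma> u u] by simp

lemma separated_spansI:
  assumes "bilinear \<sigma>" and "\<And>x y. x \<in> A \<Longrightarrow> y \<in> B \<Longrightarrow> \<sigma> x y = 0"
  shows "separated \<sigma> (span A) (span B)"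
  using bilinear_eq_0_on_spans[OF assms] by (auto simp: separated_def sperp_def)

lemma separated_sym:
  assumes "symplectic_form \<sigma>" and "separated \<sigma> H K"
  shows "separated \<sigma> K H"
proof -
  have "\<sigma> k h = 0" if "k \<in> K" "h \<in> H" for k h
    using assms(2) that symplectic_form_antisym[OF assms(1), of h k]
    by (auto simp: separated_def sperp_def)
  then show ?thesis
    by (auto simp: separated_def sperp_def)
qed

lemma fa_prob_measure_additive:
  fixes n :: nat
  assumes "fa_prob_measure \<sigma> \<mu>" and "\<And>i. i < n \<Longrightarrow> subspace (Hs i)"
    and "\<And>i j. i < n \<Longrightarrow> j < n \<Longrightarrow> i \<noteq> j \<Longrightarrow> separated \<sigma> (Hs i) (Hs j)"
  shows "\<mu> (span (\<Union>i<n. Hs i)) = (\<Sum>i<n. \<mu> (Hs i))"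
  using assms unfolding fa_prob_measure_def by blast

lemma fa_prob_measure_separated_add:
  assumes "fa_prob_measure \<sigma> \<mu>" and "subspace A" "subspace B"
    and "separated \<sigma> A B" "separated \<sigma> B A"
  shows "\<mu> (span (A \<union> B)) = \<mu> A + \<mu> B"
proof -
  define Hs where "Hs i = (if i = 0 then A else B)" for i :: nat
  have "A \<union> B = (\<Union>i<2. Hs i)"
    by (auto simp: Hs_def less_2_cases_iff)
  then have "\<mu> (span (A \<union> B)) = \<mu> (span (\<Union>i<2. Hs i))"
    by (simp only:)
  also have "\<dots> = (\<Sum>i<2. \<mu> (Hs i))"
    by (rule fa_prob_measure_additive[OF assms(1)])
      (use assms in \<open>auto simp: Hs_def less_2_cases_iff\<close>)
  also have "\<dots> = \<mu> A + \<mu> B"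
    by (simp add: Hs_def numeral_2_eq_2)
  finally show ?thesis .
qed

lemma fa_prob_measure_line:
  assumes "symplectic_form \<sigma>" and "fa_prob_measure \<sigma> \<mu>"
  shows "\<mu> (span {g}) = 0"
proof -
  have "separated \<sigma> (span {g}) (span {g})"
    by (rule separated_spansI[OF symplectic_form_bilinear[OF assms(1)]])
      (simp add: symplectic_form_alternating[OF assms(1)])
  then have "\<mu> (span (span {g} \<union> span {g})) = \<mu> (span {g}) + \<mu> (span {g})"
    using fa_prob_measure_separated_add[OF assms(2)] by blast
  then show ?thesis
    by (simp add: span_span)
qed

lemma fa_prob_measure_span_insert:
  assumes sf: "symplectic_form \<sigma>" and m: "fa_prob_measure \<sigma> \<mu>" and ab: "\<sigma> a b \<noteq> 0"
  shows "\<mu> (span {a, b, g}) = \<mu> (span {a, b})"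
proof -
  have bil: "bilinear \<sigma>"
    using sf by (rule symplectic_form_bilinear)
  have ba: "\<sigma> b a \<noteq> 0"
    using ab symplectic_form_antisym[OF sf, of a b] by simp
  define \<alpha> \<beta> where "\<alpha> = \<sigma> g b / \<sigma> a b" and "\<beta> = \<sigma> g a / \<sigma> b a"
  define g' where "g' = g - \<alpha> *\<^sub>R a - \<beta> *\<^sub>R b"
  have "\<sigma> g' a = 0" "\<sigma> g' b = 0"
    using ab ba symplectic_form_alternating[OF sf]
    by (simp_all add: g'_def \<alpha>_def \<beta>_def bilinear_lsub[OF bil] bilinear_lmul[OF bil])
  then have "\<sigma> a g' = 0" "\<sigma> b g' = 0"
    using symplectic_form_antisym[OF sf] by (metis neg_equal_0_iff_equal)+
  then have sep: "separated \<sigma> (span {a, b}) (span {g'})"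
    by (intro separated_spansI[OF bil]) auto
  have "g = g' + \<alpha> *\<^sub>R a + \<beta> *\<^sub>R b"
    by (simp add: g'_def)
  then have "g \<in> span {g', a, b}"
    by (metis insertCI span_add span_base span_scale)
  moreover have "g' \<in> span {a, b, g}"
    unfolding g'_def by (intro span_diff span_scale span_base) auto
  ultimately have "span {a, b, g} = span {g', a, b}"
    unfolding span_eq by (auto intro: span_base)
  also have "\<dots> = span (span {a, b} \<union> span {g'})"
    using span_Un_spans[of "{a, b}" "{g'}"] by simp
  also have "\<mu> \<dots> = \<mu> (span {a, b}) + \<mu> (span {g'})"
    using fa_prob_measure_separated_add[OF m _ _ sep separated_sym[OF sf sep]] by simp
  finally show ?thesis
    using fa_prob_measure_line[OF sf m] by simp
qed

lemma fa_prob_measure_planes_common_vector: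
  assumes sf: "symplectic_form \<sigma>" and m: "fa_prob_measure \<sigma> \<mu>"
    and "\<sigma> a b \<noteq> 0" "\<sigma> a c \<noteq> 0"
  shows "\<mu> (span {a, b}) = \<mu> (span {a, c})"
proof -
  have "\<mu> (span {a, b}) = \<mu> (span {a, b, c})"
    using fa_prob_measure_span_insert[OF sf m assms(3)] by simp
  also have "\<dots> = \<mu> (span {a, c, b})"
    by (simp add: insert_commute)
  also have "\<dots> = \<mu> (span {a, c})"
    using fa_prob_measure_span_insert[OF sf m assms(4)] by simp
  finally show ?thesis .
qed

lemma fa_prob_measure_symplectic_pairs_eq:
  assumes sf: "symplectic_form \<sigma>" and m: "fa_prob_measure \<sigma> \<mu>"
    and ab: "\<sigma> a b \<noteq> 0" and cd: "\<sigma> c d \<noteq> 0"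
  shows "\<mu> (span {a, b}) = \<mu> (span {c, d})"
proof -
  have flip: "\<sigma> v u \<noteq> 0" if "\<sigma> u v \<noteq> 0" for u v
    using that symplectic_form_antisym[OF sf, of u v] by simp
  have link: "\<mu> (span {u, v}) = \<mu> (span {w, z})"
    if uv: "\<sigma> u v \<noteq> 0" and wz: "\<sigma> w z \<noteq> 0" and uw: "\<sigma> u w \<noteq> 0" for u v w z
  proof -
    have "\<mu> (span {u, v}) = \<mu> (span {w, u})"
      using fa_prob_measure_planes_common_vector[OF sf m uv uw] by (simp add: insert_commute)
    also have "\<dots> = \<mu> (span {w, z})"
      by (rule fa_prob_measure_planes_common_vector[OF sf m flip[OF uw] wz])
    finally show ?thesis .
  qed
  consider "\<sigma> a c \<noteq> 0" | "\<sigma> b c \<noteq> 0" | "\<sigma> a d \<noteq> 0" | "\<sigma> b d \<noteq> 0"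
    | "\<sigma> a c = 0" "\<sigma> b c = 0" "\<sigma> a d = 0" "\<sigma> b d = 0"
    by blast
  then show ?thesis
  proof cases
    case 5
    have bil: "bilinear \<sigma>"
      using sf by (rule symplectic_form_bilinear)
    have "\<sigma> b (a + c) = \<sigma> b a" "\<sigma> (a + c) d = \<sigma> c d"
      using 5 by (simp_all add: bilinear_radd[OF bil] bilinear_ladd[OF bil])
    then have "\<sigma> b (a + c) \<noteq> 0" "\<sigma> d (a + c) \<noteq> 0" "\<sigma> (a + c) d \<noteq> 0"
      using ab cd flip by metis+
    then have "\<mu> (span {b, a}) = \<mu> (span {d, a + c})"
      using link[OF flip[OF ab]] by (simp add: insert_commute)
    also have "\<dots> = \<mu> (span {c, d})"
      using link[OF _ cd flip[OF cd]] \<open>\<sigma> d (a + c) \<noteq> 0\<close> by blast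
    finally show ?thesis
      by (simp add: insert_commute)
  qed (use link[OF ab cd] link[OF flip[OF ab] cd] link[OF ab flip[OF cd]]
      link[OF flip[OF ab] flip[OF cd]] in \<open>simp_all add: insert_commute\<close>)
qed

lemma symplectic_planeE:
  assumes sf: "symplectic_form \<sigma>" and H: "symplectic_plane \<sigma> H"
  obtains e f where "H = span {e, f}" and "\<sigma> e f \<noteq> 0"
proof -
  obtain B where B: "B \<subseteq> H" "independent B" "H \<subseteq> span B" "card B = dim H"
    by (rule basis_exists)
  then obtain e f where ef: "B = {e, f}" "e \<noteq> f"
    using H by (auto simp: symplectic_plane_def card_2_iff)
  have span: "H = span {e, f}"
    using span_subspace[OF B(1,3)] H ef by (simp add: symplectic_plane_def)
  have "\<sigma> e f \<noteq> 0"
  proof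
    assume ef0: "\<sigma> e f = 0"
    have "\<sigma> e h = 0" if "h \<in> H" for h
      by (rule bilinear_eq_0_on_spans[OF symplectic_form_bilinear[OF sf], of "{e}" "{e, f}"])
        (use that span ef0 symplectic_form_alternating[OF sf, of e] in \<open>auto intro: span_base\<close>)
    then have "e \<in> H \<inter> sperp \<sigma> H"
      using B(1) ef by (auto simp: sperp_def)
    moreover have "e \<noteq> 0"
      using B(2) ef dependent_zero by blast
    ultimately show False
      using H by (auto simp: symplectic_plane_def)
  qed
  with span that show ?thesis
    by blast
qed

theorem lemmaB2:
  fixes \<sigma> :: "'v::real_vector \<Rightarrow> 'v \<Rightarrow> real" and \<mu> :: "'v set \<Rightarrow> real"
    and K H :: "'v set"
  assumes "symplectic_form \<sigma>"
    and "fa_prob_measure \<sigma> \<mu>"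
    and "symplectic_plane \<sigma> K"
    and "symplectic_plane \<sigma> H"
  shows "\<mu> K = \<mu> H"
proof -
  obtain e f where K: "K = span {e, f}" and ef: "\<sigma> e f \<noteq> 0"
    using symplectic_planeE[OF assms(1,3)] .
  obtain e' f' where H: "H = span {e', f'}" and ef': "\<sigma> e' f' \<noteq> 0"
    using symplectic_planeE[OF assms(1,4)] .
  show ?thesis
    unfolding K H by (rule fa_prob_measure_symplectic_pairs_eq[OF assms(1,2) ef ef'])
qed

end
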